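(* For all $x\ge y\ge 1$ and $n>x+y$, the maximum possible number of edges in any task-dependency graph produced by the $(x,y)$ edge-addition process on $n$ vertices is $\binom{n}{2}+1-\binom{x}{2}-\binom{y+1}{2}$.
   Context: A task-dependency graph is a finite directed acyclic graph (no loops, no multiple edges). A vertex is initial if it has in-degree $0$ and terminal if it has out-degree $0$ (an isolated vertex is both). An $(x,y)$ task-dependency graph has exactly $x$ initial and exactly $y$ terminal vertices. The $(x,y)$ edge-addition process on $n$ vertices: start with the empty graph on $\{1,\dots,n\}$ and repeatedly add, uniformly at random, an edge $(a,b)$ with $a<b$ not yet present; if an addition would cause fewer than $x$ initial vertices or fewer than $y$ terminal vertices, it is cancelled. The process halts if the graph after some edge addition is an $(x,y)$ task-dependency graph, or if no more edges can be added; the produced graph is the final graph (over all possible runs), not necessarily an $(x,y)$ task-dependency graph. *)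

theory Defs
  imports Main
begin

text \<open>Graphs on vertex set {1..n} are edge sets E of pairs (a,b) with a < b.\<close>

definition initial_vertices :: "nat \<Rightarrow> (nat \<times> nat) set \<Rightarrow> nat set" where
  "initial_vertices n E = {v \<in> {1..n}. \<forall>u. (u, v) \<notin> E}"

definition terminal_vertices :: "nat \<Rightarrow> (nat \<times> nat) set \<Rightarrow> nat set" where
  "terminal_vertices n E = {v \<in> {1..n}. \<forall>w. (v, w) \<notin> E}"

definition is_xy_tdg :: "nat \<Rightarrow> nat \<Rightarrow> nat \<Rightarrow> (nat \<times> nat) set \<Rightarrow> bool" where
  "is_xy_tdg n x y E \<longleftrightarrow>
     card (initial_vertices n E) = x \<and> card (terminal_vertices n E) = y"

text \<open>An edge addition that is possible (edge not present) and not cancelled.\<close>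
definition valid_addition :: "nat \<Rightarrow> nat \<Rightarrow> nat \<Rightarrow> (nat \<times> nat) set \<Rightarrow> nat \<times> nat \<Rightarrow> bool" where
  "valid_addition n x y E e \<longleftrightarrow>
     (fst e < snd e \<and> fst e \<in> {1..n} \<and> snd e \<in> {1..n} \<and> e \<notin> E \<and>
      card (initial_vertices n (insert e E)) \<ge> x \<and>
      card (terminal_vertices n (insert e E)) \<ge> y)"

text \<open>Graphs reachable by a run of the (x,y) edge-addition process that has not yet halted
  before the last addition.  The process halts once the graph after an edge addition is an
  (x,y) task-dependency graph.\<close>
inductive reachable :: "nat \<Rightarrow> nat \<Rightarrow> nat \<Rightarrow> (nat \<times> nat) set \<Rightarrow> bool"
  for n x y where
  start: "reachable n x y {}"
| step: "reachable n x y E \<Longrightarrow> (E = {} \<or> \<not> is_xy_tdg n x y E) \<Longrightarrow>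
          valid_addition n x y E e \<Longrightarrow> reachable n x y (insert e E)"

definition produced :: "nat \<Rightarrow> nat \<Rightarrow> nat \<Rightarrow> (nat \<times> nat) set \<Rightarrow> bool" where
  "produced n x y E \<longleftrightarrow> reachable n x y E \<and>
     ((E \<noteq> {} \<and> is_xy_tdg n x y E) \<or> (\<forall>e. \<not> valid_addition n x y E e))"

end

theory Submission
  imports Defs
begin

(*
  Count non-edges. In a graph produced by the process, the initial vertices I and the terminal
  vertices T are independent sets, and every vertex of I \<inter> T is isolated. If A is one of these
  sets (or a subset of I \<inter> T) and B the other, and some vertex c outside A is non-adjacent to all
  but at most one vertex of A, then at least (|A|+1 choose 2) + (|B| choose 2) - 1 pairs are
  non-edges. Such a c always exists. If the process stopped at an (x,y) task-dependency graph,
  one endpoint of the last edge has no other edge on that side, for otherwise the last addition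
  would have changed neither I nor T. If no edge can be added, then either |T| > y and every
  terminal vertex except the smallest one is initial, or |I| > x and every initial vertex except
  the largest one is terminal. As x \<ge> y, every produced graph misses at least
  (x choose 2) + (y+1 choose 2) - 1 edges. Equality holds for the graph with all edges (u,v),
  u < v, x < v, u < n - y, completed by the edge (n - y, n).
*)

definition two_subsets :: "'a set \<Rightarrow> 'a set set" where
  "two_subsets A = {B. B \<subseteq> A \<and> card B = 2}"

definition cross_pairs :: "'a set \<Rightarrow> 'a set \<Rightarrow> 'a set set" where
  "cross_pairs K W = (\<lambda>(v, w). {v, w}) ` (K \<times> W)"

lemma finite_two_subsets: "finite A \<Longrightarrow> finite (two_subsets A)"
  unfolding two_subsets_def by (rule finite_subset[of _ "Pow A"]) auto

lemma card_two_subsets: "finite A \<Longrightarrow> card (two_subsets A) = card A choose 2"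
  by (simp add: two_subsets_def n_subsets)

lemma two_subsets_Int: "two_subsets A \<inter> two_subsets B = two_subsets (A \<inter> B)"
  unfolding two_subsets_def by auto

lemma card_cross_pairs:
  assumes "finite K" "finite W" "K \<inter> W = {}"
  shows "card (cross_pairs K W) = card K * card W"
proof -
  have "inj_on (\<lambda>(v, w). {v, w}) (K \<times> W)"
    using assms(3) by (auto simp: inj_on_def doubleton_eq_iff)
  then show ?thesis
    unfolding cross_pairs_def by (simp add: card_image card_cartesian_product)
qed

lemma finite_cross_pairs: "finite K \<Longrightarrow> finite W \<Longrightarrow> finite (cross_pairs K W)"
  unfolding cross_pairs_def by simp

lemma cross_pairs_Int_two_subsets:
  "K \<inter> S = {} \<or> W \<inter> S = {} \<Longrightarrow> cross_pairs K W \<inter> two_subsets S = {}"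
  unfolding cross_pairs_def two_subsets_def by blast

lemma card_two_subsets_Un:
  assumes "finite A" "finite B"
  shows "card (two_subsets A \<union> two_subsets B) + (card (A \<inter> B) choose 2) =
    (card A choose 2) + (card B choose 2)"
  using card_Un_Int[OF finite_two_subsets finite_two_subsets, of A B] assms
  by (simp add: two_subsets_Int card_two_subsets)

(* The pairs inside A or inside B, the pairs {c, t} with t \<in> A - B, and the pairs joining A \<inter> B to
   V - (A \<union> B) form disjoint families; the last one makes up for the pairs inside A \<inter> B, which
   the first one counts only once. *)
lemma card_family_of_pairs_ge:
  assumes "finite V" "finite N" "A \<subseteq> V" "B \<subseteq> V" "c \<notin> A"
    and "two_subsets A \<subseteq> N" "two_subsets B \<subseteq> N"
    and "\<forall>t\<in>A - B - {d}. {c, t} \<in> N"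
    and "\<forall>v\<in>A \<inter> B. \<forall>w\<in>V - (A \<union> B). {v, w} \<in> N"
    and "card A + card B < card V"
  shows "(card A + 1 choose 2) + (card B choose 2) \<le> card N + 1"
proof -
  define K where "K = A \<inter> B"
  define Q where "Q = cross_pairs {c} (A - B - {d})"
  define X where "X = cross_pairs K (V - (A \<union> B))"
  define P where "P = two_subsets A \<union> two_subsets B"
  have fin: "finite A" "finite B" "finite K"
    using assms(1,3,4) by (auto simp: K_def intro: finite_subset)
  have card_P: "card P + (card K choose 2) = (card A choose 2) + (card B choose 2)"
    using card_two_subsets_Un fin by (simp add: P_def K_def)
  have card_A_B: "card (A \<union> B) + card K = card A + card B"
    using card_Un_Int[of A B] fin by (simp add: K_def)
  have "card (A - B) \<le> card (A - B - {d}) + 1"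
    using fin card_Suc_Diff1[of "A - B" d] by (cases "d \<in> A - B") auto
  moreover have "card (A - B) + card K = card A"
    using fin by (simp add: K_def card_Diff_subset_Int card_mono le_infI1 inf_commute)
  moreover have "card Q = card (A - B - {d})"
    using fin assms(5) by (simp add: Q_def card_cross_pairs)
  ultimately have card_Q: "card A \<le> card Q + card K + 1" by linarith
  have "card X = card K * card (V - (A \<union> B))"
    unfolding X_def by (rule card_cross_pairs) (use fin assms(1) in \<open>auto simp: K_def\<close>)
  then have card_X: "card X = card K * (card V - card (A \<union> B))"
    using assms(1,3,4) by (simp add: card_Diff_subset finite_subset)
  have "card K + 1 \<le> card V - card (A \<union> B)"
    using card_A_B assms(10) by linarith
  then have "card K * (card K + 1) \<le> card X"
    unfolding card_X by (rule mult_le_mono2)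
  moreover have "card K choose 2 \<le> card K * card K"
    unfolding choose_two by (meson div_le_dividend diff_le_self mult_le_mono2 order_trans)
  ultimately have card_K: "(card K choose 2) + card K \<le> card X"
    by (simp add: algebra_simps)
  have "Q \<inter> two_subsets A = {}" "Q \<inter> two_subsets B = {}"
    "X \<inter> two_subsets A = {}" "X \<inter> two_subsets B = {}"
    using assms(5) unfolding Q_def X_def by (auto intro!: cross_pairs_Int_two_subsets)
  moreover have "X \<inter> Q = {}"
    using assms(5) unfolding X_def Q_def K_def cross_pairs_def by (auto simp: doubleton_eq_iff)
  ultimately have "P \<inter> Q = {}" "(P \<union> Q) \<inter> X = {}"
    unfolding P_def by blast+
  moreover have "P \<union> Q \<union> X \<subseteq> N"
    using assms(6-9) by (auto simp: P_def Q_def X_def K_def cross_pairs_def)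
  moreover have "finite P" "finite Q" "finite X"
    using fin assms(1) by (auto simp: P_def Q_def X_def finite_two_subsets finite_cross_pairs)
  ultimately have "card P + card Q + card X \<le> card N"
    using card_mono[OF assms(2)] by (metis card_Un_disjoint finite_UnI)
  then show ?thesis
    using card_P card_Q card_K by (simp add: numeral_2_eq_2)
qed

definition possible_edges :: "nat \<Rightarrow> (nat \<times> nat) set" where
  "possible_edges n = {(u, v). u < v \<and> u \<in> {1..n} \<and> v \<in> {1..n}}"

definition non_edges :: "nat \<Rightarrow> (nat \<times> nat) set \<Rightarrow> nat set set" where
  "non_edges n E = (\<lambda>(u, v). {u, v}) ` (possible_edges n - E)"

definition independent :: "(nat \<times> nat) set \<Rightarrow> nat set \<Rightarrow> bool" where
  "independent E A \<longleftrightarrow> (\<forall>p\<in>A. \<forall>q\<in>A. (p, q) \<notin> E)"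

definition isolated :: "(nat \<times> nat) set \<Rightarrow> nat \<Rightarrow> bool" where
  "isolated E v \<longleftrightarrow> (\<forall>w. (v, w) \<notin> E \<and> (w, v) \<notin> E)"

lemma independent_subset: "independent E B \<Longrightarrow> A \<subseteq> B \<Longrightarrow> independent E A"
  unfolding independent_def by blast

lemma finite_possible_edges: "finite (possible_edges n)"
  unfolding possible_edges_def by (rule finite_subset[of _ "{1..n} \<times> {1..n}"]) auto

lemma inj_on_possible_edges: "inj_on (\<lambda>(u, v). {u, v}) (possible_edges n)"
  unfolding inj_on_def possible_edges_def by (auto simp: doubleton_eq_iff)

lemma doubleton_in_non_edges:
  assumes "u \<in> {1..n}" "v \<in> {1..n}" "u \<noteq> v" "(u, v) \<notin> E" "(v, u) \<notin> E"
  shows "{u, v} \<in> non_edges n E"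
proof (cases "u < v")
  case True
  then show ?thesis
    using assms unfolding non_edges_def possible_edges_def by (auto intro!: image_eqI[of _ _ "(u, v)"])
next
  case False
  then show ?thesis
    using assms unfolding non_edges_def possible_edges_def
    by (auto simp: insert_commute intro!: image_eqI[of _ _ "(v, u)"])
qed

lemma image_possible_edges: "(\<lambda>(u, v). {u, v}) ` possible_edges n = two_subsets {1..n}"
proof
  show "(\<lambda>(u, v). {u, v}) ` possible_edges n \<subseteq> two_subsets {1..n}"
    unfolding possible_edges_def two_subsets_def by auto
  show "two_subsets {1..n} \<subseteq> (\<lambda>(u, v). {u, v}) ` possible_edges n"
  proof
    fix B assume "B \<in> two_subsets {1..n}"
    then obtain u v where "B = {u, v}" "u \<noteq> v" "u \<in> {1..n}" "v \<in> {1..n}"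
      unfolding two_subsets_def by (auto simp: card_2_iff)
    then show "B \<in> (\<lambda>(u, v). {u, v}) ` possible_edges n"
      using doubleton_in_non_edges[of u n v "{}"] by (simp add: non_edges_def)
  qed
qed

lemma finite_non_edges: "finite (non_edges n E)"
  unfolding non_edges_def using finite_possible_edges by simp

lemma card_edges_add_non_edges:
  assumes "E \<subseteq> possible_edges n"
  shows "card E + card (non_edges n E) = n choose 2"
proof -
  have "card (non_edges n E) = card (possible_edges n - E)"
    unfolding non_edges_def by (rule card_image, rule inj_on_subset[OF inj_on_possible_edges]) auto
  moreover have "card (possible_edges n) = n choose 2"
    using card_image[OF inj_on_possible_edges, of n] card_two_subsets[of "{1..n}"]
    by (simp add: image_possible_edges)
  moreover have "card E \<le> card (possible_edges n)"
    using assms finite_possible_edges by (rule card_mono[rotated])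
  ultimately show ?thesis
    using assms finite_possible_edges by (simp add: card_Diff_subset finite_subset)
qed

lemma two_subsets_subset_non_edges:
  assumes "A \<subseteq> {1..n}" "independent E A"
  shows "two_subsets A \<subseteq> non_edges n E"
proof
  fix B assume "B \<in> two_subsets A"
  then obtain p q where "B = {p, q}" "p \<noteq> q" "p \<in> A" "q \<in> A"
    unfolding two_subsets_def by (auto simp: card_2_iff)
  moreover from this have "p \<in> {1..n}" "q \<in> {1..n}"
    using assms(1) by blast+
  ultimately show "B \<in> non_edges n E"
    using assms(2) doubleton_in_non_edges[of p n q E] by (auto simp: independent_def)
qed

lemma card_edges_bound:
  assumes "E \<subseteq> possible_edges n" "A \<subseteq> {1..n}" "B \<subseteq> {1..n}"
    and "independent E A" "independent E B" "\<forall>v\<in>A \<inter> B. isolated E v"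
    and "c \<in> {1..n}" "c \<notin> A" "\<forall>t\<in>A - {d}. (c, t) \<notin> E \<and> (t, c) \<notin> E"
    and "card A + card B < n"
  shows "card E + (card A + 1 choose 2) + (card B choose 2) \<le> (n choose 2) + 1"
proof -
  have "(card A + 1 choose 2) + (card B choose 2) \<le> card (non_edges n E) + 1"
  proof (rule card_family_of_pairs_ge)
    show "two_subsets A \<subseteq> non_edges n E" "two_subsets B \<subseteq> non_edges n E"
      using assms(2-5) by (simp_all add: two_subsets_subset_non_edges)
    show "\<forall>t\<in>A - B - {d}. {c, t} \<in> non_edges n E"
      using assms(2,7-9) by (auto intro!: doubleton_in_non_edges)
    show "\<forall>v\<in>A \<inter> B. \<forall>w\<in>{1..n} - (A \<union> B). {v, w} \<in> non_edges n E"
      using assms(2,6) by (auto simp: isolated_def intro!: doubleton_in_non_edges)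
  qed (use assms finite_non_edges in auto)
  then show ?thesis
    using card_edges_add_non_edges[OF assms(1)] by linarith
qed

lemma card_edges_bound_isolated:
  assumes "E \<subseteq> possible_edges n" "B \<subseteq> {1..n}" "independent E B"
    and "S \<subseteq> B" "\<forall>v\<in>S. isolated E v" "c \<in> {1..n}" "c \<notin> S"
    and "k \<le> card S" "k + card B < n"
  shows "card E + (k + 1 choose 2) + (card B choose 2) \<le> (n choose 2) + 1"
proof -
  obtain A where A: "A \<subseteq> S" "card A = k"
    using assms(8) obtain_subset_with_card_n by metis
  have "card E + (card A + 1 choose 2) + (card B choose 2) \<le> (n choose 2) + 1"
  proof (rule card_edges_bound[OF assms(1) _ assms(2) _ assms(3) _ assms(6)])
    show "independent E A"
      using A(1) assms(3,4) by (blast intro: independent_subset)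
    show "\<forall>t\<in>A - {c}. (c, t) \<notin> E \<and> (t, c) \<notin> E"
      using A(1) assms(5) by (auto simp: isolated_def)
    show "A \<subseteq> {1..n}" "\<forall>v\<in>A \<inter> B. isolated E v" "c \<notin> A"
      using A(1) assms(2,4,5,7) by blast+
    show "card A + card B < n"
      using A(2) assms(9) by simp
  qed
  then show ?thesis
    by (simp only: A(2))
qed

lemma independent_initial_vertices: "independent E (initial_vertices n E)"
  unfolding independent_def initial_vertices_def by blast

lemma independent_terminal_vertices: "independent E (terminal_vertices n E)"
  unfolding independent_def terminal_vertices_def by blast

lemma isolated_if_initial_terminal:
  "v \<in> initial_vertices n E \<Longrightarrow> v \<in> terminal_vertices n E \<Longrightarrow> isolated E v"
  unfolding isolated_def initial_vertices_def terminal_vertices_def by blast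

lemma initial_vertices_no_predecessor: "v \<in> initial_vertices n E \<Longrightarrow> (u, v) \<notin> E"
  unfolding initial_vertices_def by blast

lemma terminal_vertices_no_successor: "v \<in> terminal_vertices n E \<Longrightarrow> (v, w) \<notin> E"
  unfolding terminal_vertices_def by blast

lemma initial_vertices_empty: "initial_vertices n {} = {1..n}"
  unfolding initial_vertices_def by auto

lemma terminal_vertices_empty: "terminal_vertices n {} = {1..n}"
  unfolding terminal_vertices_def by auto

lemma initial_vertices_insert: "initial_vertices n (insert (a, b) E) = initial_vertices n E - {b}"
  unfolding initial_vertices_def by auto

lemma terminal_vertices_insert: "terminal_vertices n (insert (a, b) E) = terminal_vertices n E - {a}"
  unfolding terminal_vertices_def by auto

lemma finite_initial_vertices: "finite (initial_vertices n E)"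
  unfolding initial_vertices_def by simp

lemma finite_terminal_vertices: "finite (terminal_vertices n E)"
  unfolding terminal_vertices_def by simp

lemma card_initial_vertices_antimono:
  "E \<subseteq> F \<Longrightarrow> card (initial_vertices n F) \<le> card (initial_vertices n E)"
  by (rule card_mono[OF finite_initial_vertices]) (auto simp: initial_vertices_def)

lemma card_terminal_vertices_antimono:
  "E \<subseteq> F \<Longrightarrow> card (terminal_vertices n F) \<le> card (terminal_vertices n E)"
  by (rule card_mono[OF finite_terminal_vertices]) (auto simp: terminal_vertices_def)

lemma reachable_subset_possible_edges: "reachable n x y E \<Longrightarrow> E \<subseteq> possible_edges n"
  by (induction rule: reachable.induct) (auto simp: valid_addition_def possible_edges_def)

lemma reachable_card_vertices:
  assumes "reachable n x y E" "x \<le> n" "y \<le> n"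
  shows "x \<le> card (initial_vertices n E)" "y \<le> card (terminal_vertices n E)"
  using assms
  by (induction rule: reachable.induct)
    (auto simp: initial_vertices_empty terminal_vertices_empty valid_addition_def)

(* If both endpoints of the last edge (a, b) had further edges on that side, adding it changed
   neither the initial nor the terminal vertices, and the process would have halted before. *)
lemma reachable_tdg_last_edge:
  assumes "reachable n x y E" "E \<noteq> {}" "is_xy_tdg n x y E"
  obtains a b where "(a, b) \<in> E" "(\<forall>w. (a, w) \<in> E \<longrightarrow> w = b) \<or> (\<forall>u. (u, b) \<in> E \<longrightarrow> u = a)"
proof -
  obtain E0 a b where E: "E = insert (a, b) E0" and E0: "E0 = {} \<or> \<not> is_xy_tdg n x y E0"
    using assms(1,2) by (cases rule: reachable.cases) auto
  have "(\<forall>w. (a, w) \<in> E \<longrightarrow> w = b) \<or> (\<forall>u. (u, b) \<in> E \<longrightarrow> u = a)"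
  proof (rule ccontr)
    assume "\<not> ?thesis"
    then obtain w u where "(a, w) \<in> E0" "(u, b) \<in> E0"
      using E by auto
    then have "initial_vertices n E0 = initial_vertices n E"
      "terminal_vertices n E0 = terminal_vertices n E" "E0 \<noteq> {}"
      unfolding E initial_vertices_insert terminal_vertices_insert
      by (auto simp: initial_vertices_def terminal_vertices_def)
    then show False
      using E0 assms(3) by (simp add: is_xy_tdg_def)
  qed
  then show thesis
    using E that by blast
qed

lemma saturated_blocks_addition:
  assumes "\<forall>e. \<not> valid_addition n x y E e" "u < v" "u \<in> {1..n}" "v \<in> {1..n}" "(u, v) \<notin> E"
  shows "card (initial_vertices n E - {v}) < x \<or> card (terminal_vertices n E - {u}) < y"
proof -
  have "\<not> valid_addition n x y E (u, v)"
    using assms(1) by blast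
  then show ?thesis
    using assms(2-5) by (auto simp: valid_addition_def initial_vertices_insert terminal_vertices_insert)
qed

(* For a terminal vertex t > m, adding (m, t) leaves at least y terminal vertices, so it can
   only be cancelled because t is initial and there are exactly x initial vertices. *)
lemma saturated_many_terminal_vertices:
  assumes "\<forall>e. \<not> valid_addition n x y E e" "0 < y"
    and "x \<le> card (initial_vertices n E)" "y < card (terminal_vertices n E)"
  defines "m \<equiv> Min (terminal_vertices n E)"
  shows "terminal_vertices n E - {m} \<subseteq> initial_vertices n E" "card (initial_vertices n E) = x"
proof -
  let ?I = "initial_vertices n E" and ?T = "terminal_vertices n E"
  have "?T \<noteq> {}" "finite ?T"
    using assms(4) finite_terminal_vertices by auto
  then have m: "m \<in> ?T" "\<forall>t\<in>?T. m \<le> t"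
    unfolding m_def by auto
  have "y \<le> card (?T - {m})"
    using assms(4) m(1) by (simp add: finite_terminal_vertices)
  then have blocked: "card (?I - {t}) < x" if "t \<in> ?T - {m}" for t
    using saturated_blocks_addition[OF assms(1), of m t] that m
    by (force simp: terminal_vertices_def)
  then show incl: "?T - {m} \<subseteq> ?I"
    using assms(3) by force
  have "?T - {m} \<noteq> {}"
    using \<open>y \<le> card (?T - {m})\<close> assms(2) by (metis card.empty leD)
  then obtain t where "t \<in> ?T - {m}"
    by blast
  with incl blocked have "t \<in> ?I" "card (?I - {t}) < x"
    by auto
  then show "card ?I = x"
    using assms(3) card_Suc_Diff1[OF finite_initial_vertices] by (metis Suc_leI le_antisym)
qed

lemma saturated_many_initial_vertices:
  assumes "\<forall>e. \<not> valid_addition n x y E e" "0 < x"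
    and "y \<le> card (terminal_vertices n E)" "x < card (initial_vertices n E)"
  defines "m \<equiv> Max (initial_vertices n E)"
  shows "initial_vertices n E - {m} \<subseteq> terminal_vertices n E" "card (terminal_vertices n E) = y"
proof -
  let ?I = "initial_vertices n E" and ?T = "terminal_vertices n E"
  have "?I \<noteq> {}" "finite ?I"
    using assms(4) finite_initial_vertices by auto
  then have m: "m \<in> ?I" "\<forall>t\<in>?I. t \<le> m"
    unfolding m_def by auto
  have "x \<le> card (?I - {m})"
    using assms(4) m(1) by (simp add: finite_initial_vertices)
  then have blocked: "card (?T - {t}) < y" if "t \<in> ?I - {m}" for t
    using saturated_blocks_addition[OF assms(1), of t m] that m
    by (force simp: initial_vertices_def)
  then show incl: "?I - {m} \<subseteq> ?T"
    using assms(3) by force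
  have "?I - {m} \<noteq> {}"
    using \<open>x \<le> card (?I - {m})\<close> assms(2) by (metis card.empty leD)
  then obtain t where "t \<in> ?I - {m}"
    by blast
  with incl blocked have "t \<in> ?T" "card (?T - {t}) < y"
    by auto
  then show "card ?T = y"
    using assms(3) card_Suc_Diff1[OF finite_terminal_vertices] by (metis Suc_leI le_antisym)
qed

lemma choose_two_exchange: "y \<le> x \<Longrightarrow> (x choose 2) + (y + 1 choose 2) \<le> (x + 1 choose 2) + (y choose 2)"
  by (simp add: numeral_2_eq_2)

lemma card_edges_bound_initial_terminal:
  assumes "E \<subseteq> possible_edges n"
    and "{A, B} = {initial_vertices n E, terminal_vertices n E}"
    and "c \<in> {1..n}" "c \<notin> A" "\<forall>t\<in>A - {d}. (c, t) \<notin> E \<and> (t, c) \<notin> E"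
    and "card A + card B < n"
  shows "card E + (card A + 1 choose 2) + (card B choose 2) \<le> (n choose 2) + 1"
proof (rule card_edges_bound[OF assms(1) _ _ _ _ _ assms(3-6)])
  have "A \<in> {initial_vertices n E, terminal_vertices n E}" "B \<in> {initial_vertices n E, terminal_vertices n E}"
    using assms(2) by blast+
  moreover have "initial_vertices n E \<subseteq> {1..n}" "terminal_vertices n E \<subseteq> {1..n}"
    by (auto simp: initial_vertices_def terminal_vertices_def)
  ultimately show "A \<subseteq> {1..n}" "B \<subseteq> {1..n}" "independent E A" "independent E B"
    using independent_initial_vertices independent_terminal_vertices by auto
  have "A \<inter> B = initial_vertices n E \<inter> terminal_vertices n E"
    using assms(2) by (auto simp: doubleton_eq_iff)
  then show "\<forall>v\<in>A \<inter> B. isolated E v"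
    using isolated_if_initial_terminal by blast
qed

lemma card_reachable_tdg_le:
  assumes "reachable n x y E" "is_xy_tdg n x y E" "y \<le> x" "x + y < n"
  shows "card E + (x choose 2) + (y + 1 choose 2) \<le> (n choose 2) + 1"
proof -
  let ?I = "initial_vertices n E" and ?T = "terminal_vertices n E"
  have E: "E \<subseteq> possible_edges n"
    using assms(1) by (rule reachable_subset_possible_edges)
  have card: "card ?I = x" "card ?T = y"
    using assms(2) by (auto simp: is_xy_tdg_def)
  then have "E \<noteq> {}"
    using assms(4) by (auto simp: initial_vertices_empty)
  then obtain a b where ab: "(a, b) \<in> E"
    and degree: "(\<forall>w. (a, w) \<in> E \<longrightarrow> w = b) \<or> (\<forall>u. (u, b) \<in> E \<longrightarrow> u = a)"
    using reachable_tdg_last_edge assms(1,2) by metis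
  have "a \<in> {1..n}" "b \<in> {1..n}"
    using ab E by (auto simp: possible_edges_def)
  from degree show ?thesis
  proof (elim disjE)
    assume "\<forall>w. (a, w) \<in> E \<longrightarrow> w = b"
    then have "a \<notin> ?T" "\<forall>t\<in>?T - {b}. (a, t) \<notin> E \<and> (t, a) \<notin> E"
      using ab by (blast dest: terminal_vertices_no_successor)+
    moreover have "card ?T + card ?I < n"
      using card assms(4) by simp
    ultimately have "card E + (card ?T + 1 choose 2) + (card ?I choose 2) \<le> (n choose 2) + 1"
      by (rule card_edges_bound_initial_terminal[OF E insert_commute \<open>a \<in> {1..n}\<close>])
    then show ?thesis
      by (simp only: card)
  next
    assume "\<forall>u. (u, b) \<in> E \<longrightarrow> u = a"
    then have "b \<notin> ?I" "\<forall>t\<in>?I - {a}. (b, t) \<notin> E \<and> (t, b) \<notin> E"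
      using ab by (blast dest: initial_vertices_no_predecessor)+
    moreover have "card ?I + card ?T < n"
      using card assms(4) by simp
    ultimately have "card E + (card ?I + 1 choose 2) + (card ?T choose 2) \<le> (n choose 2) + 1"
      by (rule card_edges_bound_initial_terminal[OF E refl \<open>b \<in> {1..n}\<close>])
    then have "card E + (x + 1 choose 2) + (y choose 2) \<le> (n choose 2) + 1"
      by (simp only: card)
    then show ?thesis
      using choose_two_exchange[OF assms(3)] by linarith
  qed
qed

lemma card_saturated_le:
  assumes "reachable n x y E" "\<forall>e. \<not> valid_addition n x y E e" "\<not> is_xy_tdg n x y E"
    and "0 < y" "y \<le> x" "x + y < n"
  shows "card E + (x choose 2) + (y + 1 choose 2) \<le> (n choose 2) + 1"
proof -
  let ?I = "initial_vertices n E" and ?T = "terminal_vertices n E"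
  have E: "E \<subseteq> possible_edges n"
    using assms(1) by (rule reachable_subset_possible_edges)
  have bounds: "x \<le> card ?I" "y \<le> card ?T"
    using reachable_card_vertices[OF assms(1)] assms(6) by simp_all
  have vertices: "?I \<subseteq> {1..n}" "?T \<subseteq> {1..n}"
    by (auto simp: initial_vertices_def terminal_vertices_def)
  have isolated: "isolated E v" if "v \<in> ?I" "v \<in> ?T" for v
    using that by (rule isolated_if_initial_terminal)
  from assms(3) bounds have "y < card ?T \<or> x < card ?I"
    unfolding is_xy_tdg_def by linarith
  then show ?thesis
  proof (elim disjE)
    assume many: "y < card ?T"
    define m where "m = Min ?T"
    have "m \<in> ?T"
      unfolding m_def using many by (intro Min_in finite_terminal_vertices) auto
    moreover have "?T - {m} \<subseteq> ?I" "card ?I = x"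
      using saturated_many_terminal_vertices[OF assms(2,4) bounds(1) many] by (simp_all add: m_def)
    moreover have "y \<le> card (?T - {m})"
      using many by (auto simp: card_Diff_singleton_if)
    ultimately have "card E + (y + 1 choose 2) + (card ?I choose 2) \<le> (n choose 2) + 1"
      using vertices isolated assms(6)
      by (intro card_edges_bound_isolated[OF E vertices(1) independent_initial_vertices, of "?T - {m}" m])
        auto
    then show ?thesis
      by (simp add: \<open>card ?I = x\<close>)
  next
    assume many: "x < card ?I"
    define m where "m = Max ?I"
    have "m \<in> ?I"
      unfolding m_def using many by (intro Max_in finite_initial_vertices) auto
    moreover have "?I - {m} \<subseteq> ?T" "card ?T = y"
      using saturated_many_initial_vertices[OF assms(2) _ bounds(2) many] assms(4,5)
      by (simp_all add: m_def)
    moreover have "x \<le> card (?I - {m})"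
      using many by (auto simp: card_Diff_singleton_if)
    ultimately have "card E + (x + 1 choose 2) + (card ?T choose 2) \<le> (n choose 2) + 1"
      using vertices isolated assms(6)
      by (intro card_edges_bound_isolated[OF E vertices(2) independent_terminal_vertices, of "?I - {m}" m])
        auto
    then have "card E + (x + 1 choose 2) + (y choose 2) \<le> (n choose 2) + 1"
      by (simp only: \<open>card ?T = y\<close>)
    with choose_two_exchange[OF assms(5)] show ?thesis
      by linarith
  qed
qed

lemma card_produced_le:
  assumes "produced n x y E" "0 < y" "y \<le> x" "x + y < n"
  shows "card E + (x choose 2) + (y + 1 choose 2) \<le> (n choose 2) + 1"
proof (cases "is_xy_tdg n x y E")
  case True
  then show ?thesis
    using assms card_reachable_tdg_le by (auto simp: produced_def)
next
  case False
  then show ?thesis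
    using assms card_saturated_le by (auto simp: produced_def)
qed

lemma reachable_if_not_tdg:
  assumes "G \<subseteq> possible_edges n" "\<not> is_xy_tdg n x y G"
    and "x \<le> card (initial_vertices n G)" "y \<le> card (terminal_vertices n G)"
  shows "reachable n x y G"
proof -
  have "reachable n x y F" if "F \<subseteq> G" for F
    using finite_subset[OF that finite_subset[OF assms(1) finite_possible_edges]] that
  proof (induction F rule: finite_induct)
    case empty
    show ?case
      by (rule reachable.start)
  next
    case (insert e F)
    have "card (initial_vertices n G) \<le> card (initial_vertices n F)"
      "card (terminal_vertices n G) \<le> card (terminal_vertices n F)"
      "card (initial_vertices n G) \<le> card (initial_vertices n (insert e F))"
      "card (terminal_vertices n G) \<le> card (terminal_vertices n (insert e F))"
      using insert.prems
      by (simp_all add: card_initial_vertices_antimono card_terminal_vertices_antimono)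
    then have "\<not> is_xy_tdg n x y F" "valid_addition n x y F e"
      using assms insert by (auto simp: is_xy_tdg_def valid_addition_def possible_edges_def)
    then show ?case
      using insert by (blast intro: reachable.step)
  qed
  then show ?thesis
    by blast
qed

(* Its initial vertices are 1, ..., x and its terminal vertices n - y, ..., n: one terminal
   vertex too many, which the edge (n - y, n) removes. *)
definition pre_extremal_graph :: "nat \<Rightarrow> nat \<Rightarrow> nat \<Rightarrow> (nat \<times> nat) set" where
  "pre_extremal_graph n x y = {(u, v). 1 \<le> u \<and> u < v \<and> v \<le> n \<and> x < v \<and> u < n - y}"

definition extremal_graph :: "nat \<Rightarrow> nat \<Rightarrow> nat \<Rightarrow> (nat \<times> nat) set" where
  "extremal_graph n x y = insert (n - y, n) (pre_extremal_graph n x y)"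

lemma initial_vertices_pre_extremal_graph:
  assumes "0 < x" "x + y < n"
  shows "initial_vertices n (pre_extremal_graph n x y) = {1..x}"
proof (intro equalityI subsetI)
  fix v assume "v \<in> initial_vertices n (pre_extremal_graph n x y)"
  then have "(1, v) \<notin> pre_extremal_graph n x y" "v \<in> {1..n}"
    by (auto simp: initial_vertices_def)
  then show "v \<in> {1..x}"
    using assms by (auto simp: pre_extremal_graph_def)
qed (use assms in \<open>auto simp: initial_vertices_def pre_extremal_graph_def\<close>)

lemma terminal_vertices_pre_extremal_graph:
  assumes "x + y < n"
  shows "terminal_vertices n (pre_extremal_graph n x y) = {n - y..n}"
proof (intro equalityI subsetI)
  fix v assume "v \<in> terminal_vertices n (pre_extremal_graph n x y)"
  then have "(v, n) \<notin> pre_extremal_graph n x y" "v \<in> {1..n}"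
    by (auto simp: terminal_vertices_def)
  then show "v \<in> {n - y..n}"
    using assms by (auto simp: pre_extremal_graph_def)
qed (use assms in \<open>auto simp: terminal_vertices_def pre_extremal_graph_def\<close>)

lemma extremal_graph_subset_possible_edges:
  "0 < y \<Longrightarrow> y < n \<Longrightarrow> extremal_graph n x y \<subseteq> possible_edges n"
  by (auto simp: extremal_graph_def pre_extremal_graph_def possible_edges_def)

lemma produced_extremal_graph:
  assumes "0 < x" "0 < y" "x + y < n"
  shows "produced n x y (extremal_graph n x y)"
proof -
  let ?G = "pre_extremal_graph n x y"
  have initial: "initial_vertices n (extremal_graph n x y) = {1..x}"
    using assms initial_vertices_pre_extremal_graph
    by (auto simp: extremal_graph_def initial_vertices_insert)
  have terminal: "terminal_vertices n (extremal_graph n x y) = {n - y + 1..n}"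
    using assms terminal_vertices_pre_extremal_graph
    by (auto simp: extremal_graph_def terminal_vertices_insert)
  have "\<not> is_xy_tdg n x y ?G"
    using assms by (simp add: is_xy_tdg_def terminal_vertices_pre_extremal_graph)
  moreover have "reachable n x y ?G"
  proof (rule reachable_if_not_tdg[OF _ calculation])
    show "?G \<subseteq> possible_edges n"
      using extremal_graph_subset_possible_edges assms by (auto simp: extremal_graph_def)
  qed (use assms in \<open>simp_all add: initial_vertices_pre_extremal_graph
      terminal_vertices_pre_extremal_graph\<close>)
  moreover have "valid_addition n x y ?G (n - y, n)"
    using assms initial terminal
    by (simp add: valid_addition_def extremal_graph_def pre_extremal_graph_def)
  moreover have "is_xy_tdg n x y (extremal_graph n x y)"
    using assms by (simp add: is_xy_tdg_def initial terminal)
  ultimately show ?thesis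
    unfolding produced_def extremal_graph_def by (blast intro: reachable.step)
qed

lemma card_non_edges_extremal_graph:
  assumes "0 < y" "x + y < n"
  shows "card (non_edges n (extremal_graph n x y)) + 1 \<le> (x choose 2) + (y + 1 choose 2)"
proof -
  let ?P = "two_subsets {1..x}" and ?Q = "two_subsets {n - y + 1..n}"
    and ?R = "cross_pairs {n - y} {n - y + 1..n - 1}"
  have "non_edges n (extremal_graph n x y) \<subseteq> ?P \<union> ?Q \<union> ?R"
  proof
    fix z assume "z \<in> non_edges n (extremal_graph n x y)"
    then obtain u v where z: "z = {u, v}" "(u, v) \<in> possible_edges n"
      "(u, v) \<notin> extremal_graph n x y"
      unfolding non_edges_def by auto
    then have "u < v" "1 \<le> u" "v \<le> n"
      by (auto simp: possible_edges_def)
    moreover from z(3) calculation have "v \<le> x \<or> n - y < u \<or> (u = n - y \<and> v < n)"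
      by (auto simp: extremal_graph_def pre_extremal_graph_def)
    ultimately show "z \<in> ?P \<union> ?Q \<union> ?R"
      unfolding z(1) by (auto simp: two_subsets_def cross_pairs_def)
  qed
  then have "card (non_edges n (extremal_graph n x y)) \<le> card (?P \<union> ?Q \<union> ?R)"
    by (intro card_mono) (simp_all add: finite_two_subsets finite_cross_pairs)
  also have "\<dots> \<le> card ?P + card ?Q + card ?R"
    by (meson card_Un_le add_le_mono1 order_trans)
  also have "\<dots> = (x choose 2) + (y choose 2) + (y - 1)"
    using assms by (simp add: card_two_subsets card_cross_pairs)
  finally show ?thesis
    using assms by (simp add: numeral_2_eq_2)
qed

theorem mainTheorem14:
  fixes x y n :: nat
  assumes "y \<ge> 1" and "x \<ge> y" and "n > x + y"
  shows "int (Max {card E | E. produced n x y E}) =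
           int (n choose 2) + 1 - int (x choose 2) - int ((y + 1) choose 2)"
proof -
  let ?E = "extremal_graph n x y"
  have upper: "card E + (x choose 2) + (y + 1 choose 2) \<le> (n choose 2) + 1" if "produced n x y E" for E
    using card_produced_le[OF that] assms by simp
  have produced: "produced n x y ?E"
    using produced_extremal_graph assms by simp
  have "card ?E + card (non_edges n ?E) = n choose 2"
    using extremal_graph_subset_possible_edges assms by (simp add: card_edges_add_non_edges)
  then have lower: "(n choose 2) + 1 \<le> card ?E + (x choose 2) + (y + 1 choose 2)"
    using card_non_edges_extremal_graph[of y x n] assms by simp
  have "Max {card E | E. produced n x y E} = card ?E"
  proof (rule Max_eqI)
    have "{card E | E. produced n x y E} \<subseteq> {..(n choose 2) + 1}"
      using upper by fastforce
    then show "finite {card E | E. produced n x y E}"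
      by (rule finite_subset) simp
  qed (use upper produced lower in fastforce)+
  then show ?thesis
    using upper[OF produced] lower by simp
qed

end
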